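(* Consider the system $\dot x(t) = f(x(t))$, $x(0)=x_0$, where $x\in\mathbb R^n$, $f:\mathbb R^n\to\mathbb R^n$ is continuous with $f(0)=0$, and solutions exist and are unique. Let $V:\mathbb R^n\to\mathbb R$ be a continuously differentiable, positive definite, proper function satisfying \[ \dot V(x) \leq -\alpha_1V(x)^{\gamma_1}-\alpha_2V(x)^{\gamma_2}+\delta_1V(x) \] for all $x\in\mathbb R^n\setminus\{0\}$ along the trajectories of the system, where $\alpha_1,\alpha_2>0$, $\delta_1\in\mathbb R$, $\gamma_1 = 1+\frac{1}{\mu}$, $\gamma_2 = 1-\frac{1}{\mu}$ for some $\mu>1$. Let $r\coloneqq \frac{\delta_1}{2\sqrt{\alpha_1\alpha_2}}$, let $0<k<1$, $k_1 = \sqrt{\frac{4\alpha_1\alpha_2-\delta_1^2}{4\alpha_1^2}}$ and $k_2 = -\frac{\delta_1}{\sqrt{4\alpha_1\alpha_2-\delta_1^2}}$. Then there exists a neighborhood $D\subseteq\mathbb R^n$ of the origin such that for all $x(0)\in D$, the trajectories satisfy $x(t)\in D$ for all $t\geq 0$ and reach the origin within a fixed time $T$, where \[ D = \begin{cases} \mathbb R^n, & r<1,\\[2pt] \left\{x \;\middle|\; V(x)\leq k^\mu\left(\frac{\delta_1-\sqrt{\delta_1^2-4\alpha_1\alpha_2}}{2\alpha_1}\right)^\mu\right\}, & r\geq 1,\end{cases} \] and \[ T\leq \begin{cases} \frac{\mu\pi}{2\sqrt{\alpha_1\alpha_2}}, & r\leq 0,\\[2pt] \frac{\mu}{\alpha_1k_1}\left(\frac{\pi}{2}-\tan^{-1}k_2\right),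 & 0\leq r<1,\\[2pt] \frac{\mu k}{(1-k)\sqrt{\alpha_1\alpha_2}}, & r\geq 1.\end{cases} \]
   Context: $\dot V(x)$ denotes the time derivative of $V$ along trajectories, i.e. $\frac{\partial V}{\partial x}(x) f(x)$. A function is proper here in the sense of radially unbounded (sublevel sets are compact). $\tan^{-1}$ is the principal inverse tangent. *)

theory Defs
  imports "HOL-Analysis.Analysis"
begin

definition is_solution :: "(real^'n \<Rightarrow> real^'n) \<Rightarrow> real^'n \<Rightarrow> (real \<Rightarrow> real^'n) \<Rightarrow> bool" where
  "is_solution f x0 x \<longleftrightarrow> x 0 = x0 \<and>
     (\<forall>t\<ge>0. (x has_vector_derivative f (x t)) (at t within {0..}))"

end

theory Submission
  imports Defs
begin

(*
  Along a solution, v(t) = V(x(t)) satisfies v' <= -a v^(1+1/mu) - b v^(1-1/mu) + d v. In the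
  variable w = v^(1/mu) this reads w' <= -(a w^2 - d w + b) / mu, so for any G with
  G' (a w^2 - d w + b) >= mu the function t + G(w(t)) does not increase while v > 0, and v must
  vanish before time sup G. If the quadratic has no positive root (r < 1), an arctangent
  primitive gives such a G on all of (0, oo); for d <= 0 one may replace d by 0. If r >= 1,
  V cannot increase while w stays below the smaller root w_, so the sublevel set
  {V <= (k w_)^mu} is invariant, and on it G(w) = mu w / (sqrt(a b) (w_ - w)) works.
*)

lemma DERIV_within_nonpos_imp_decreasing:
  fixes h h' :: "real \<Rightarrow> real"
  assumes "a \<le> b"
    and deriv: "\<And>t. t \<in> {a..b} \<Longrightarrow> (h has_real_derivative h' t) (at t within {a..b})"
    and nonpos: "\<And>t. a < t \<Longrightarrow> t < b \<Longrightarrow> h' t \<le> 0"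
  shows "h b \<le> h a"
proof (rule DERIV_nonpos_imp_decreasing_open[OF \<open>a \<le> b\<close>])
  fix t assume t: "a < t" "t < b"
  then have "at t within {a..b} = at t"
    by (intro at_within_interior) simp
  then show "\<exists>y. (h has_real_derivative y) (at t) \<and> y \<le> 0"
    using deriv[of t] nonpos[OF t] t by auto
qed (use deriv in \<open>rule DERIV_continuous_on\<close>)

lemma first_time_reaching:
  fixes v :: "real \<Rightarrow> real"
  assumes cont: "continuous_on {a..b} v" and "a \<le> b" "e \<le> v b"
  obtains u where "a \<le> u" "u \<le> b" "e \<le> v u" "\<And>t. a \<le> t \<Longrightarrow> t < u \<Longrightarrow> v t < e"
proof -
  define A where "A = {t \<in> {a..b}. e \<le> v t}"
  have "closed A"
    unfolding A_def by (intro continuous_on_closed_Collect_le cont continuous_on_const) simp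
  moreover have "b \<in> A" "bdd_below A"
    using assms by (auto simp: A_def bdd_below_def)
  ultimately have "Inf A \<in> A"
    using closed_contains_Inf by blast
  moreover have "v t < e" if "a \<le> t" "t < Inf A" for t
  proof -
    have "t \<notin> A"
      using cInf_lower[OF _ \<open>bdd_below A\<close>, of t] that(2) by linarith
    moreover have "t \<le> b"
      using \<open>Inf A \<in> A\<close> that(2) by (simp add: A_def)
    ultimately show ?thesis
      using that(1) by (auto simp: A_def)
  qed
  ultimately show ?thesis
    using that by (auto simp: A_def)
qed

lemma last_time_below:
  fixes v :: "real \<Rightarrow> real"
  assumes cont: "continuous_on {a..b} v" and "a \<le> b" "v a \<le> c"
  obtains s where "a \<le> s" "s \<le> b" "v s \<le> c" "\<And>t. s < t \<Longrightarrow> t \<le> b \<Longrightarrow> c < v t"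
proof -
  define B where "B = {t \<in> {a..b}. v t \<le> c}"
  have "closed B"
    unfolding B_def by (intro continuous_on_closed_Collect_le cont continuous_on_const) simp
  moreover have "a \<in> B" "bdd_above B"
    using assms by (auto simp: B_def bdd_above_def)
  ultimately have "Sup B \<in> B"
    using closed_contains_Sup by blast
  moreover have "c < v t" if "Sup B < t" "t \<le> b" for t
  proof -
    have "t \<notin> B"
      using cSup_upper[OF _ \<open>bdd_above B\<close>, of t] that(1) by linarith
    moreover have "a \<le> t"
      using \<open>Sup B \<in> B\<close> that(1) by (simp add: B_def)
    ultimately show ?thesis
      using that(2) by (auto simp: B_def)
  qed
  ultimately show ?thesis
    using that by (auto simp: B_def)
qed

lemma sublevel_invariant:
  fixes v v' :: "real \<Rightarrow> real"
  assumes deriv: "\<And>t. 0 \<le> t \<Longrightarrow> (v has_real_derivative v' t) (at t within {0..})"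
    and nonpos: "\<And>t. 0 \<le> t \<Longrightarrow> c < v t \<Longrightarrow> v t < M \<Longrightarrow> v' t \<le> 0"
    and "v 0 \<le> c" "c < M" "0 \<le> t"
  shows "v t \<le> c"
proof (rule ccontr)
  assume "\<not> v t \<le> c"
  have deriv_on: "(v has_real_derivative v' \<tau>) (at \<tau> within {p..q})"
    if "0 \<le> p" "\<tau> \<in> {p..q}" for p q \<tau>
    using DERIV_subset[OF deriv[of \<tau>], of "{p..q}"] that by simp
  have cont: "continuous_on {0..q} v" for q
    using deriv_on[of 0] by (intro DERIV_continuous_on) simp
  define e where "e = min (v t) ((c + M) / 2)"
  have e: "c < e" "e < M" "e \<le> v t"
    using \<open>\<not> v t \<le> c\<close> \<open>c < M\<close> unfolding e_def by (simp_all add: min_less_iff_disj)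
  \<comment> \<open>Between the last time s at which v is below c and the first time u at which v reaches e,
      v stays in the band (c, M) where it cannot increase.\<close>
  obtain u where u: "0 \<le> u" "u \<le> t" "e \<le> v u" "\<And>\<tau>. 0 \<le> \<tau> \<Longrightarrow> \<tau> < u \<Longrightarrow> v \<tau> < e"
    using first_time_reaching[OF cont \<open>0 \<le> t\<close> e(3)] by blast
  obtain s where s: "0 \<le> s" "s \<le> u" "v s \<le> c" "\<And>\<tau>. s < \<tau> \<Longrightarrow> \<tau> \<le> u \<Longrightarrow> c < v \<tau>"
    using last_time_below[OF cont u(1) \<open>v 0 \<le> c\<close>] by blast
  have "v u \<le> v s"
  proof (rule DERIV_within_nonpos_imp_decreasing[OF s(2) deriv_on[OF s(1)]])
    fix \<tau> assume \<tau>: "s < \<tau>" "\<tau> < u"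
    then have "c < v \<tau>" "v \<tau> < e"
      using s(1,4) u(4) by simp_all
    then show "v' \<tau> \<le> 0"
      using nonpos[of \<tau>] e(2) s(1) \<tau>(1) by simp
  qed
  then show False
    using u(3) s(3) e(1) by linarith
qed

lemma powr_root_factorization:
  fixes v \<mu> a b d :: real
  assumes "0 < v"
  shows "- a * v powr (1 + 1/\<mu>) - b * v powr (1 - 1/\<mu>) + d * v
       = - (v powr (1 - 1/\<mu>) * (a * (v powr (1/\<mu>))\<^sup>2 - d * v powr (1/\<mu>) + b))"
proof -
  have "v powr (1 - 1/\<mu>) * (v powr (1/\<mu>))\<^sup>2 = v powr (1 + 1/\<mu>)"
    "v powr (1 - 1/\<mu>) * v powr (1/\<mu>) = v"
    using assms by (simp_all add: power2_eq_square add.commute flip: powr_add)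
  then show ?thesis
    using assms by (simp add: algebra_simps)
qed

lemma powr_le_root:
  fixes x c \<mu> :: real
  assumes "0 \<le> x" "0 \<le> c" "0 < \<mu>" "x \<le> c powr \<mu>"
  shows "x powr (1/\<mu>) \<le> c"
proof -
  have "x powr (1/\<mu>) \<le> (c powr \<mu>) powr (1/\<mu>)"
    using assms by (intro powr_mono2) simp_all
  then show ?thesis
    using assms by (simp add: powr_powr)
qed

(* Along w' <= -q w / mu the function G decreases at least at unit rate, so G w bounds the time
   needed to reach 0 from w. *)
definition settling_certificate ::
    "real \<Rightarrow> (real \<Rightarrow> real) \<Rightarrow> real set \<Rightarrow> (real \<Rightarrow> real) \<Rightarrow> (real \<Rightarrow> real) \<Rightarrow> real \<Rightarrow> bool"
  where "settling_certificate \<mu> q W G g B \<longleftrightarrow>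
    (\<forall>w\<in>W. (G has_real_derivative g w) (at w) \<and> 0 \<le> g w \<and> \<mu> \<le> g w * q w \<and> 0 < G w \<and> G w \<le> B)"

lemma powr_root_decay:
  fixes v v' Q \<mu> :: real
  assumes "0 < v" "0 < \<mu>" "v' \<le> - (v powr (1 - 1/\<mu>) * Q)"
  shows "1/\<mu> * v powr (1/\<mu> - 1) * v' \<le> - Q / \<mu>"
proof -
  have "1/\<mu> * v powr (1/\<mu> - 1) * v' \<le> 1/\<mu> * v powr (1/\<mu> - 1) * - (v powr (1 - 1/\<mu>) * Q)"
    using assms by (intro mult_left_mono) simp_all
  also have "\<dots> = - Q / \<mu>"
    using assms(1) by (simp add: powr_add[symmetric])
  finally show ?thesis .
qed

lemma settling_time_bound:
  fixes v v' q G g :: "real \<Rightarrow> real"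
  assumes deriv: "\<And>t. 0 \<le> t \<Longrightarrow> (v has_real_derivative v' t) (at t within {0..})"
    and nonneg: "\<And>t. 0 \<le> t \<Longrightarrow> 0 \<le> v t"
    and decay: "\<And>t. 0 \<le> t \<Longrightarrow> 0 < v t \<Longrightarrow> v' t \<le> - (v t powr (1 - 1/\<mu>) * q (v t powr (1/\<mu>)))"
    and "0 < \<mu>" "0 \<le> B"
    and cert: "settling_certificate \<mu> q W G g B"
    and in_W: "\<And>t. 0 \<le> t \<Longrightarrow> 0 < v t \<Longrightarrow> v t powr (1/\<mu>) \<in> W"
  shows "\<exists>t. 0 \<le> t \<and> t \<le> B \<and> v t = 0"
proof (rule ccontr)
  assume "\<nexists>t. 0 \<le> t \<and> t \<le> B \<and> v t = 0"
  then have pos: "0 < v t" if "0 \<le> t" "t \<le> B" for t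
    using nonneg[of t] that by force
  define w where "w t = v t powr (1/\<mu>)" for t
  define w' where "w' t = 1/\<mu> * v t powr (1/\<mu> - 1) * v' t" for t
  have G_bounds: "0 < G (w t)" "G (w t) \<le> B" if "0 \<le> t" "t \<le> B" for t
    using cert in_W[OF that(1) pos[OF that]] by (auto simp: settling_certificate_def w_def)
  \<comment> \<open>t + G (w t) does not increase, since G' (w) w' \<le> - G' (w) q (w) / \<mu> \<le> -1\<close>
  have h_deriv: "((\<lambda>t. t + G (w t)) has_real_derivative 1 + g (w t) * w' t) (at t within {0..B})"
    and h_nonpos: "1 + g (w t) * w' t \<le> 0" if t: "t \<in> {0..B}" for t
  proof -
    have vt: "0 < v t"
      using pos t by simp
    have g: "(G has_real_derivative g (w t)) (at (w t))" "0 \<le> g (w t)" "\<mu> \<le> g (w t) * q (w t)"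
      using cert in_W[of t] vt t by (auto simp: settling_certificate_def w_def)
    have "(w has_real_derivative w' t) (at t within {0..})"
      unfolding w_def[abs_def] w'_def
      by (rule DERIV_chain2[OF has_real_derivative_powr[OF vt] deriv]) (use t in simp)
    then have "(w has_real_derivative w' t) (at t within {0..B})"
      by (rule DERIV_subset) auto
    then have "((\<lambda>t. G (w t)) has_real_derivative g (w t) * w' t) (at t within {0..B})"
      by (rule DERIV_chain2[of G "g (w t)" w, OF g(1)])
    then show "((\<lambda>t. t + G (w t)) has_real_derivative 1 + g (w t) * w' t) (at t within {0..B})"
      by (intro DERIV_add DERIV_ident)
    have "w' t \<le> - q (w t) / \<mu>"
      unfolding w'_def w_def by (rule powr_root_decay[OF vt \<open>0 < \<mu>\<close> decay]) (use t vt in simp_all)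
    then have "\<mu> * w' t \<le> - q (w t)"
      using \<open>0 < \<mu>\<close> by (simp add: field_simps)
    then have "g (w t) * (\<mu> * w' t) \<le> g (w t) * - q (w t)"
      using g(2) by (rule mult_left_mono)
    then have "\<mu> * (1 + g (w t) * w' t) \<le> 0"
      using g(3) by (simp add: algebra_simps)
    then show "1 + g (w t) * w' t \<le> 0"
      using \<open>0 < \<mu>\<close> by (simp add: mult_le_0_iff)
  qed
  have "B + G (w B) \<le> 0 + G (w 0)"
    by (rule DERIV_within_nonpos_imp_decreasing[OF \<open>0 \<le> B\<close> h_deriv h_nonpos]) auto
  then show False
    using G_bounds[of 0] G_bounds[of B] \<open>0 \<le> B\<close> by simp
qed

definition arctan_settling_time :: "real \<Rightarrow> real \<Rightarrow> real \<Rightarrow> real \<Rightarrow> real" where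
  "arctan_settling_time \<mu> a b d =
     2 * \<mu> / sqrt (4 * a * b - d\<^sup>2) * (pi / 2 - arctan (- d / sqrt (4 * a * b - d\<^sup>2)))"

lemma quadratic_pos_if_discriminant_neg:
  fixes a b d w :: real
  assumes "0 < a" "d\<^sup>2 < 4 * a * b"
  shows "0 < a * w\<^sup>2 - d * w + b"
proof -
  have "4 * a * (a * w\<^sup>2 - d * w + b) = (4 * a * b - d\<^sup>2) + (2 * a * w - d)\<^sup>2"
    by (simp add: algebra_simps power2_eq_square)
  also have "\<dots> > 0"
    using assms(2) by (simp add: add_pos_nonneg)
  finally show ?thesis
    using assms(1) by (simp add: zero_less_mult_iff)
qed

lemma discriminant_neg_if_less_two_sqrt:
  fixes a b d :: real
  assumes "0 < a" "0 < b" "0 \<le> d" "d < 2 * sqrt (a * b)"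
  shows "d\<^sup>2 < 4 * a * b"
proof -
  have "d\<^sup>2 < (2 * sqrt (a * b))\<^sup>2"
    using assms(3,4) by (intro power_strict_mono) simp_all
  then show ?thesis
    using assms(1,2) by (simp add: power_mult_distrib)
qed

lemma arctan_settling_has_derivative:
  fixes a b d \<mu> w :: real
  assumes "0 < a" "d\<^sup>2 < 4 * a * b"
  defines "e \<equiv> sqrt (4 * a * b - d\<^sup>2)"
  shows "((\<lambda>w. 2 * \<mu> / e * (arctan ((2 * a * w - d) / e) - arctan (- d / e)))
           has_real_derivative \<mu> / (a * w\<^sup>2 - d * w + b)) (at w)"
proof -
  have "0 < e"
    using assms(2) by (simp add: e_def)
  have square: "e\<^sup>2 + (2 * a * w - d)\<^sup>2 = 4 * a * (a * w\<^sup>2 - d * w + b)"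
    using assms(2) by (simp add: e_def algebra_simps power2_eq_square)
  have "((\<lambda>w. 2 * \<mu> / e * (arctan ((2 * a * w - d) / e) - arctan (- d / e))) has_real_derivative
      2 * \<mu> / e * (inverse (1 + ((2 * a * w - d) / e)\<^sup>2) * (2 * a / e))) (at w)"
    using \<open>0 < e\<close> by (auto intro!: derivative_eq_intros)
  also have "2 * \<mu> / e * (inverse (1 + ((2 * a * w - d) / e)\<^sup>2) * (2 * a / e))
      = 4 * a * \<mu> / (e\<^sup>2 + (2 * a * w - d)\<^sup>2)"
    using \<open>0 < e\<close> by (simp add: divide_simps add_pos_nonneg) (simp add: algebra_simps power2_eq_square)
  also have "\<dots> = \<mu> / (a * w\<^sup>2 - d * w + b)"
    unfolding square using assms(1) by simp
  finally show ?thesis .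
qed

lemma arctan_settling_certificate:
  fixes a b d \<mu> :: real
  assumes "0 < a" "0 < \<mu>" and disc: "d\<^sup>2 < 4 * a * b"
  defines "e \<equiv> sqrt (4 * a * b - d\<^sup>2)"
  shows "settling_certificate \<mu> (\<lambda>w. a * w\<^sup>2 - d * w + b) {0<..}
           (\<lambda>w. 2 * \<mu> / e * (arctan ((2 * a * w - d) / e) - arctan (- d / e)))
           (\<lambda>w. \<mu> / (a * w\<^sup>2 - d * w + b)) (arctan_settling_time \<mu> a b d)"
  unfolding settling_certificate_def
proof (intro ballI conjI arctan_settling_has_derivative[OF \<open>0 < a\<close> disc, folded e_def])
  fix w :: real assume "w \<in> {0<..}"
  have "0 < a * w\<^sup>2 - d * w + b"
    by (rule quadratic_pos_if_discriminant_neg[OF \<open>0 < a\<close> disc])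
  then show "0 \<le> \<mu> / (a * w\<^sup>2 - d * w + b)" "\<mu> \<le> \<mu> / (a * w\<^sup>2 - d * w + b) * (a * w\<^sup>2 - d * w + b)"
    using \<open>0 < \<mu>\<close> by simp_all
  have "0 < e"
    using disc by (simp add: e_def)
  have "- d / e < (2 * a * w - d) / e"
    using \<open>0 < a\<close> \<open>w \<in> {0<..}\<close> \<open>0 < e\<close> by (intro divide_strict_right_mono) simp_all
  then have "arctan (- d / e) < arctan ((2 * a * w - d) / e)"
    by (rule arctan_monotone)
  then show "0 < 2 * \<mu> / e * (arctan ((2 * a * w - d) / e) - arctan (- d / e))"
    using \<open>0 < \<mu>\<close> \<open>0 < e\<close> by simp
  show "2 * \<mu> / e * (arctan ((2 * a * w - d) / e) - arctan (- d / e)) \<le> arctan_settling_time \<mu> a b d"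
    unfolding arctan_settling_time_def e_def[symmetric]
    using \<open>0 < \<mu>\<close> \<open>0 < e\<close> arctan_ubound[of "(2 * a * w - d) / e"]
    by (intro mult_left_mono) simp_all
qed

lemma arctan_settling_time_nonneg:
  assumes "0 \<le> \<mu>" "d\<^sup>2 < 4 * a * b"
  shows "0 \<le> arctan_settling_time \<mu> a b d"
  using assms arctan_ubound[of "- d / sqrt (4 * a * b - d\<^sup>2)"]
  by (simp add: arctan_settling_time_def)

lemma arctan_settling_time_zero:
  assumes "0 < a" "0 < b"
  shows "arctan_settling_time \<mu> a b 0 = \<mu> * pi / (2 * sqrt (a * b))"
proof -
  have "sqrt (4 * a * b) = 2 * sqrt (a * b)"
    by (simp add: real_sqrt_mult mult.assoc)
  then show ?thesis
    by (simp add: arctan_settling_time_def)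
qed

lemma arctan_settling_time_eq:
  fixes a b d \<mu> :: real
  assumes "0 < a" "d\<^sup>2 < 4 * a * b"
  shows "arctan_settling_time \<mu> a b d
    = \<mu> / (a * sqrt ((4 * a * b - d\<^sup>2) / (4 * a\<^sup>2))) * (pi / 2 - arctan (- d / sqrt (4 * a * b - d\<^sup>2)))"
proof -
  have "sqrt ((4 * a * b - d\<^sup>2) / (4 * a\<^sup>2)) = sqrt (4 * a * b - d\<^sup>2) / (2 * a)"
    using assms by (simp add: real_sqrt_divide real_sqrt_mult)
  then show ?thesis
    using assms by (simp add: arctan_settling_time_def)
qed

definition lower_root :: "real \<Rightarrow> real \<Rightarrow> real \<Rightarrow> real" where
  "lower_root a b d = (d - sqrt (d\<^sup>2 - 4 * a * b)) / (2 * a)"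

lemma lower_root_discriminant_nonneg:
  fixes a b d :: real
  assumes "0 < a" "0 < b" "2 * sqrt (a * b) \<le> d"
  shows "(d - 2 * sqrt (a * b))\<^sup>2 \<le> d\<^sup>2 - 4 * a * b"
proof -
  define s where "s = sqrt (a * b)"
  have "0 < s" "s\<^sup>2 = a * b"
    using assms by (simp_all add: s_def)
  have "2 * s * s \<le> d * s"
    using assms(3) \<open>0 < s\<close> by (intro mult_right_mono) (simp_all add: s_def)
  then show ?thesis
    using \<open>s\<^sup>2 = a * b\<close> by (simp add: s_def[symmetric] power2_eq_square algebra_simps)
qed

lemma lower_root_le_sqrt:
  fixes a b d :: real
  assumes "0 < a" "0 < b" "2 * sqrt (a * b) \<le> d"
  shows "a * lower_root a b d \<le> sqrt (a * b)"
proof -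
  have "d - 2 * sqrt (a * b) \<le> sqrt (d\<^sup>2 - 4 * a * b)"
    using lower_root_discriminant_nonneg[OF assms] by (rule real_le_rsqrt)
  then show ?thesis
    using assms(1) by (simp add: lower_root_def)
qed

lemma lower_root_pos:
  fixes a b d :: real
  assumes "0 < a" "0 < b" "2 * sqrt (a * b) \<le> d"
  shows "0 < lower_root a b d"
proof -
  have "0 < sqrt (a * b)"
    using assms(1,2) by simp
  then have "0 < d"
    using assms(3) by linarith
  moreover have "sqrt (d\<^sup>2 - 4 * a * b) < sqrt (d\<^sup>2)"
    using assms(1,2) by (intro real_sqrt_less_mono) simp
  ultimately show ?thesis
    using assms(1) by (simp add: lower_root_def)
qed

lemma lower_root_root:
  fixes a b d :: real
  assumes "0 < a" "0 < b" "2 * sqrt (a * b) \<le> d"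
  shows "a * (lower_root a b d)\<^sup>2 - d * lower_root a b d + b = 0"
proof -
  define e where "e = sqrt (d\<^sup>2 - 4 * a * b)"
  have "0 \<le> d\<^sup>2 - 4 * a * b"
    using lower_root_discriminant_nonneg[OF assms] by (rule order_trans[OF zero_le_power2])
  then have "e\<^sup>2 = d\<^sup>2 - 4 * a * b"
    by (simp add: e_def)
  have "4 * a * (a * ((d - e) / (2 * a))\<^sup>2 - d * ((d - e) / (2 * a)) + b)
      = (d - e)\<^sup>2 - 2 * d * (d - e) + 4 * a * b"
    using assms(1) by (simp add: field_simps power2_eq_square)
  also have "\<dots> = 0"
    using \<open>e\<^sup>2 = d\<^sup>2 - 4 * a * b\<close> by (simp add: algebra_simps power2_eq_square)
  finally show ?thesis
    using assms(1) by (simp add: lower_root_def e_def)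
qed

lemma lower_root_factorization:
  fixes a b d w :: real
  assumes "0 < a" "0 < b" "2 * sqrt (a * b) \<le> d"
  defines "r \<equiv> lower_root a b d"
  shows "a * w\<^sup>2 - d * w + b = (r - w) * (d - a * w - a * r)"
proof -
  have "a * r\<^sup>2 - d * r + b = 0"
    using lower_root_root[OF assms(1-3)] by (simp add: r_def)
  then show ?thesis
    by (simp add: algebra_simps power2_eq_square)
qed

lemma lower_root_quadratic_nonneg:
  fixes a b d w :: real
  assumes "0 < a" "0 < b" "2 * sqrt (a * b) \<le> d" "w \<le> lower_root a b d"
  shows "0 \<le> a * w\<^sup>2 - d * w + b"
proof -
  define r where "r = lower_root a b d"
  have "a * w \<le> a * r"
    using assms(1,4) by (simp add: r_def)
  then have "0 \<le> d - a * w - a * r"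
    using lower_root_le_sqrt[OF assms(1-3)] assms(3) by (simp add: r_def)
  then show ?thesis
    using assms(4) by (simp add: lower_root_factorization[OF assms(1-3)] r_def)
qed

lemma lower_root_quadratic_lower_bound:
  fixes a b d w :: real
  assumes "0 < a" "0 < b" "2 * sqrt (a * b) \<le> d" "0 \<le> w" "w \<le> lower_root a b d"
  defines "r \<equiv> lower_root a b d"
  shows "sqrt (a * b) * (r - w)\<^sup>2 \<le> r * (a * w\<^sup>2 - d * w + b)"
proof -
  define s where "s = sqrt (a * b)"
  have "0 \<le> (s - a * r) * (s + a * w)"
    using lower_root_le_sqrt[OF assms(1-3)] assms(1,2,4) by (simp add: r_def s_def)
  also have "\<dots> = a * (r * (d - a * w - a * r) - s * (r - w))"
  proof -
    have "a * r\<^sup>2 - d * r + b = 0" "s * s = a * b"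
      using lower_root_root[OF assms(1-3)] assms(1,2) by (simp_all add: r_def s_def)
    then show ?thesis
      by algebra
  qed
  finally have "s * (r - w) \<le> r * (d - a * w - a * r)"
    using assms(1) by (simp add: zero_le_mult_iff)
  then have "(r - w) * (s * (r - w)) \<le> (r - w) * (r * (d - a * w - a * r))"
    using assms(5) by (intro mult_left_mono) (simp_all add: r_def)
  then have "s * (r - w)\<^sup>2 \<le> r * ((r - w) * (d - a * w - a * r))"
    by (simp add: power2_eq_square mult_ac)
  also have "\<dots> = r * (a * w\<^sup>2 - d * w + b)"
    by (simp only: r_def lower_root_factorization[OF assms(1-3)])
  finally show ?thesis
    by (simp add: s_def)
qed

lemma rational_settling_certificate:
  fixes a b d \<mu> k :: real
  assumes "0 < a" "0 < b" "0 < \<mu>" "2 * sqrt (a * b) \<le> d" "0 < k" "k < 1"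
  defines "r \<equiv> lower_root a b d" and "s \<equiv> sqrt (a * b)"
  shows "settling_certificate \<mu> (\<lambda>w. a * w\<^sup>2 - d * w + b) {0<..k * r}
           (\<lambda>w. \<mu> * w / (s * (r - w))) (\<lambda>w. \<mu> * r / (s * (r - w)\<^sup>2)) (\<mu> * k / ((1 - k) * s))"
  unfolding settling_certificate_def
proof (intro ballI conjI)
  fix w assume "w \<in> {0<..k * r}"
  then have "0 < w" "w \<le> k * r"
    by simp_all
  have "0 < r" "0 < s"
    using lower_root_pos[OF assms(1,2,4)] assms(1,2) by (simp_all add: r_def s_def)
  have "k * r < r"
    using \<open>k < 1\<close> \<open>0 < r\<close> by simp
  then have "0 < r - w"
    using \<open>w \<le> k * r\<close> by linarith
  have "((\<lambda>w. \<mu> * w / (s * (r - w))) has_real_derivative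
      (\<mu> * (s * (r - w)) - \<mu> * w * (- s)) / (s * (r - w))\<^sup>2) (at w)"
    using \<open>0 < s\<close> \<open>0 < r - w\<close> by (auto intro!: derivative_eq_intros simp: power2_eq_square)
  then show "((\<lambda>w. \<mu> * w / (s * (r - w))) has_real_derivative \<mu> * r / (s * (r - w)\<^sup>2)) (at w)"
  proof (rule DERIV_cong)
    have "(\<mu> * (s * (r - w)) - \<mu> * w * (- s)) / (s * (r - w))\<^sup>2 = s * (\<mu> * r) / (s * (s * (r - w)\<^sup>2))"
      by (simp add: algebra_simps power2_eq_square)
    also have "\<dots> = \<mu> * r / (s * (r - w)\<^sup>2)"
      using \<open>0 < s\<close> by (rule mult_divide_mult_cancel_left[OF less_imp_neq[symmetric]])
    finally show "(\<mu> * (s * (r - w)) - \<mu> * w * (- s)) / (s * (r - w))\<^sup>2 = \<mu> * r / (s * (r - w)\<^sup>2)" .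
  qed
  show "0 \<le> \<mu> * r / (s * (r - w)\<^sup>2)"
    using \<open>0 < \<mu>\<close> \<open>0 < s\<close> \<open>0 < r\<close> by simp
  have "s * (r - w)\<^sup>2 \<le> r * (a * w\<^sup>2 - d * w + b)"
    using lower_root_quadratic_lower_bound[OF assms(1,2,4), of w] \<open>0 < w\<close> \<open>0 < r - w\<close>
    by (simp add: r_def s_def)
  then have "\<mu> * (s * (r - w)\<^sup>2) \<le> \<mu> * (r * (a * w\<^sup>2 - d * w + b))"
    using \<open>0 < \<mu>\<close> by simp
  then show "\<mu> \<le> \<mu> * r / (s * (r - w)\<^sup>2) * (a * w\<^sup>2 - d * w + b)"
    using \<open>0 < s\<close> \<open>0 < r - w\<close> by (simp add: pos_le_divide_eq mult.assoc)
  show "0 < \<mu> * w / (s * (r - w))"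
    using \<open>0 < \<mu>\<close> \<open>0 < w\<close> \<open>0 < s\<close> \<open>0 < r - w\<close> by simp
  have "w * (1 - k) \<le> k * (r - w)"
    using \<open>w \<le> k * r\<close> by (simp add: algebra_simps)
  then show "\<mu> * w / (s * (r - w)) \<le> \<mu> * k / ((1 - k) * s)"
    using \<open>0 < \<mu>\<close> \<open>0 < s\<close> \<open>0 < r - w\<close> \<open>k < 1\<close> by (simp add: field_simps)
qed

lemma solution_has_real_derivative_comp:
  fixes x :: "real \<Rightarrow> real^'n" and DV :: "real^'n \<Rightarrow> ((real^'n) \<Rightarrow>\<^sub>L real)"
  assumes "is_solution f x0 x" and V_deriv: "\<And>y. (V has_derivative blinfun_apply (DV y)) (at y)"
    and "0 \<le> t"
  shows "((\<lambda>t. V (x t)) has_real_derivative DV (x t) (f (x t))) (at t within {0..})"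
proof -
  have "(x has_derivative (\<lambda>h. h *\<^sub>R f (x t))) (at t within {0..})"
    using assms(1,3) by (simp add: is_solution_def has_vector_derivative_def)
  then have "((\<lambda>t. V (x t)) has_derivative (\<lambda>h. DV (x t) (h *\<^sub>R f (x t)))) (at t within {0..})"
    by (rule has_derivative_compose[OF _ V_deriv])
  moreover have "(\<lambda>h. DV (x t) (h *\<^sub>R f (x t))) = (*) (DV (x t) (f (x t)))"
    by (auto simp: blinfun.scaleR_right)
  ultimately show ?thesis
    by (simp add: has_field_derivative_def)
qed

locale fixed_time_lyapunov =
  fixes f :: "real^'n \<Rightarrow> real^'n" and V :: "real^'n \<Rightarrow> real"
    and DV :: "real^'n \<Rightarrow> ((real^'n) \<Rightarrow>\<^sub>L real)" and a b d \<mu> :: real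
  assumes V_deriv: "\<And>x. (V has_derivative blinfun_apply (DV x)) (at x)"
    and V_zero: "V 0 = 0" and V_pos: "\<And>x. x \<noteq> 0 \<Longrightarrow> 0 < V x"
    and a_pos: "0 < a" and b_pos: "0 < b" and \<mu>_pos: "0 < \<mu>"
    and V_dot: "\<And>x. x \<noteq> 0 \<Longrightarrow>
      DV x (f x) \<le> - a * V x powr (1 + 1/\<mu>) - b * V x powr (1 - 1/\<mu>) + d * V x"
begin

lemma V_nonneg: "0 \<le> V x"
  using V_zero V_pos by (cases "x = 0") (simp_all add: less_imp_le)

lemma V_dot_root:
  assumes "x \<noteq> 0" "d \<le> d'"
  shows "DV x (f x) \<le> - (V x powr (1 - 1/\<mu>) * (a * (V x powr (1/\<mu>))\<^sup>2 - d' * V x powr (1/\<mu>) + b))"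
proof -
  have "d * V x \<le> d' * V x"
    using assms V_nonneg by (simp add: mult_right_mono)
  then show ?thesis
    using V_dot[OF assms(1)] powr_root_factorization[OF V_pos[OF assms(1)], where \<mu> = \<mu> and a = a and b = b and d = d'] by linarith
qed

lemma solution_reaches_origin:
  assumes sol: "is_solution f x0 x" and "d \<le> d'" "0 \<le> B"
    and cert: "settling_certificate \<mu> (\<lambda>w. a * w\<^sup>2 - d' * w + b) W G g B"
    and in_W: "\<And>t. 0 \<le> t \<Longrightarrow> x t \<noteq> 0 \<Longrightarrow> V (x t) powr (1/\<mu>) \<in> W"
  shows "\<exists>t. 0 \<le> t \<and> t \<le> B \<and> x t = 0"
proof -
  have "\<exists>t. 0 \<le> t \<and> t \<le> B \<and> V (x t) = 0"
  proof (rule settling_time_bound[OF _ _ _ \<mu>_pos \<open>0 \<le> B\<close> cert])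
    show "((\<lambda>t. V (x t)) has_real_derivative DV (x t) (f (x t))) (at t within {0..})" if "0 \<le> t" for t
      using solution_has_real_derivative_comp[OF sol V_deriv that] .
    show "DV (x t) (f (x t)) \<le> - (V (x t) powr (1 - 1/\<mu>) * (a * (V (x t) powr (1/\<mu>))\<^sup>2 - d' * V (x t) powr (1/\<mu>) + b))"
      if "0 < V (x t)" for t
      using V_dot_root[OF _ \<open>d \<le> d'\<close>, of "x t"] V_zero that by fastforce
    show "V (x t) powr (1/\<mu>) \<in> W" if "0 \<le> t" "0 < V (x t)" for t
      using in_W[OF that(1)] V_zero that(2) by force
  qed (use V_nonneg in auto)
  then show ?thesis
    using V_pos by (metis less_irrefl)
qed

lemma subcritical_settling:
  assumes "d < 2 * sqrt (a * b)"
  shows "\<exists>T. (\<forall>x0 x. is_solution f x0 x \<longrightarrow> (\<exists>t. 0 \<le> t \<and> t \<le> T \<and> x t = 0)) \<and>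
    (d \<le> 0 \<longrightarrow> T = \<mu> * pi / (2 * sqrt (a * b))) \<and>
    (0 \<le> d \<longrightarrow> T = \<mu> / (a * sqrt ((4 * a * b - d\<^sup>2) / (4 * a\<^sup>2))) * (pi / 2 - arctan (- d / sqrt (4 * a * b - d\<^sup>2))))"
proof (rule exI[of _ "arctan_settling_time \<mu> a b (max d 0)"], intro conjI allI impI)
  have disc: "(max d 0)\<^sup>2 < 4 * a * b"
    using discriminant_neg_if_less_two_sqrt[OF a_pos b_pos, of "max d 0"] assms a_pos b_pos by simp
  fix x0 x assume "is_solution f x0 x"
  then show "\<exists>t. 0 \<le> t \<and> t \<le> arctan_settling_time \<mu> a b (max d 0) \<and> x t = 0"
  proof (rule solution_reaches_origin[OF _ _ arctan_settling_time_nonneg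
        arctan_settling_certificate[OF a_pos \<mu>_pos disc]])
    show "V (x t) powr (1/\<mu>) \<in> {0<..}" if "0 \<le> t" "x t \<noteq> 0" for t
      using V_pos[OF that(2)] by simp
  qed (use \<mu>_pos disc in auto)
next
  show "arctan_settling_time \<mu> a b (max d 0) = \<mu> * pi / (2 * sqrt (a * b))" if "d \<le> 0"
    using arctan_settling_time_zero[OF a_pos b_pos] that by simp
  show "arctan_settling_time \<mu> a b (max d 0) = \<mu> / (a * sqrt ((4 * a * b - d\<^sup>2) / (4 * a\<^sup>2)))
      * (pi / 2 - arctan (- d / sqrt (4 * a * b - d\<^sup>2)))" if "0 \<le> d"
    using arctan_settling_time_eq[OF a_pos discriminant_neg_if_less_two_sqrt[OF a_pos b_pos that assms]] that
    by simp
qed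

lemma supercritical_invariant:
  assumes d: "2 * sqrt (a * b) \<le> d" and k: "0 < k" "k < 1" and sol: "is_solution f x0 x"
    and "0 \<le> t"
  defines "r \<equiv> lower_root a b d"
  assumes "V x0 \<le> (k * r) powr \<mu>"
  shows "V (x t) \<le> (k * r) powr \<mu>"
proof (rule sublevel_invariant[OF solution_has_real_derivative_comp[OF sol V_deriv], where M = "r powr \<mu>"])
  have "0 < r"
    using lower_root_pos[OF a_pos b_pos d] by (simp add: r_def)
  then show "(k * r) powr \<mu> < r powr \<mu>"
    using k \<mu>_pos by (simp add: powr_less_mono2)
  show "V (x 0) \<le> (k * r) powr \<mu>"
    using sol assms(7) by (simp add: is_solution_def)
  \<comment> \<open>below the smaller root of the quadratic, V cannot increase\<close>
  fix \<tau> assume "0 \<le> \<tau>" "(k * r) powr \<mu> < V (x \<tau>)" "V (x \<tau>) < r powr \<mu>"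
  then have "x \<tau> \<noteq> 0"
    using V_zero by (metis powr_ge_zero leD)
  have "V (x \<tau>) powr (1/\<mu>) \<le> r"
    using \<open>V (x \<tau>) < r powr \<mu>\<close> \<open>0 < r\<close> V_nonneg \<mu>_pos by (simp add: powr_le_root)
  then have "0 \<le> a * (V (x \<tau>) powr (1/\<mu>))\<^sup>2 - d * V (x \<tau>) powr (1/\<mu>) + b"
    using lower_root_quadratic_nonneg[OF a_pos b_pos d] by (simp add: r_def)
  then have "0 \<le> V (x \<tau>) powr (1 - 1/\<mu>) * (a * (V (x \<tau>) powr (1/\<mu>))\<^sup>2 - d * V (x \<tau>) powr (1/\<mu>) + b)"
    by simp
  then show "DV (x \<tau>) (f (x \<tau>)) \<le> 0"
    using V_dot_root[OF \<open>x \<tau> \<noteq> 0\<close> order_refl] by linarith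
qed (use \<open>0 \<le> t\<close> in simp_all)

lemma supercritical_settling:
  assumes d: "2 * sqrt (a * b) \<le> d" and k: "0 < k" "k < 1" and sol: "is_solution f x0 x"
  defines "r \<equiv> lower_root a b d"
  assumes "V x0 \<le> (k * r) powr \<mu>"
  shows "\<exists>t. 0 \<le> t \<and> t \<le> \<mu> * k / ((1 - k) * sqrt (a * b)) \<and> x t = 0"
proof (rule solution_reaches_origin[OF sol order_refl _
      rational_settling_certificate[OF a_pos b_pos \<mu>_pos d k]])
  show "0 \<le> \<mu> * k / ((1 - k) * sqrt (a * b))"
    using \<mu>_pos k a_pos b_pos by simp
  fix t assume "0 \<le> t" "x t \<noteq> 0"
  have "0 < r"
    using lower_root_pos[OF a_pos b_pos d] by (simp add: r_def)
  have "V (x t) \<le> (k * r) powr \<mu>"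
    using supercritical_invariant[OF d k sol \<open>0 \<le> t\<close>] assms(6) by (simp add: r_def)
  then have "V (x t) powr (1/\<mu>) \<le> k * r"
    using \<open>0 < r\<close> k V_nonneg \<mu>_pos by (simp add: powr_le_root)
  then show "V (x t) powr (1/\<mu>) \<in> {0<..k * lower_root a b d}"
    using V_pos[OF \<open>x t \<noteq> 0\<close>] by (simp add: r_def)
qed

lemma zero_in_interior_sublevel:
  assumes "0 < c"
  shows "0 \<in> interior {x. V x \<le> c}"
proof -
  have "continuous_on UNIV V"
    using V_deriv by (intro continuous_at_imp_continuous_on ballI has_derivative_continuous) blast
  then have "open {x. V x < c}"
    by (intro open_Collect_less continuous_on_const)
  moreover have "{x. V x < c} \<subseteq> {x. V x \<le> c}"
    by auto
  ultimately have "{x. V x < c} \<subseteq> interior {x. V x \<le> c}"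
    by (rule interior_maximal[rotated])
  then show ?thesis
    using V_zero assms by auto
qed

end

theorem theorem1:
  fixes f :: "real^'n \<Rightarrow> real^'n"
    and V :: "real^'n \<Rightarrow> real"
    and DV :: "(real^'n) \<Rightarrow> ((real^'n) \<Rightarrow>\<^sub>L real)"
    and \<alpha>1 \<alpha>2 \<delta>1 \<mu> k :: real
    and D :: "(real^'n) set"
  assumes f_cont: "continuous_on UNIV f"
    and f0: "f 0 = 0"
    and sol_ex: "\<forall>x0. \<exists>x. is_solution f x0 x"
    and sol_uniq: "\<forall>x0 x y. is_solution f x0 x \<and> is_solution f x0 y \<longrightarrow> (\<forall>t\<ge>0. x t = y t)"
    and V_deriv: "\<forall>x. (V has_derivative blinfun_apply (DV x)) (at x)"
    and DV_cont: "continuous_on UNIV DV"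
    and V_posdef: "V 0 = 0" "\<forall>x. x \<noteq> 0 \<longrightarrow> V x > 0"
    and V_proper: "\<forall>c. compact {x. V x \<le> c}"
    and \<alpha>_pos: "\<alpha>1 > 0" "\<alpha>2 > 0"
    and \<mu>_gt: "\<mu> > 1"
    and V_dot: "\<forall>x. x \<noteq> 0 \<longrightarrow>
        blinfun_apply (DV x) (f x) \<le> - \<alpha>1 * V x powr (1 + 1/\<mu>) - \<alpha>2 * V x powr (1 - 1/\<mu>) + \<delta>1 * V x"
    and k_bounds: "0 < k" "k < 1"
    and D_def: "D = (if \<delta>1 / (2 * sqrt (\<alpha>1 * \<alpha>2)) < 1 then UNIV
        else {x. V x \<le> k powr \<mu> * ((\<delta>1 - sqrt (\<delta>1\<^sup>2 - 4 * \<alpha>1 * \<alpha>2)) / (2 * \<alpha>1)) powr \<mu>})"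
  shows "0 \<in> interior D \<and>
    (\<forall>x0\<in>D. \<forall>x. is_solution f x0 x \<longrightarrow> (\<forall>t\<ge>0. x t \<in> D)) \<and>
    (\<exists>T. (\<forall>x0\<in>D. \<forall>x. is_solution f x0 x \<longrightarrow> (\<exists>t. 0 \<le> t \<and> t \<le> T \<and> x t = 0)) \<and>
      (\<delta>1 / (2 * sqrt (\<alpha>1 * \<alpha>2)) \<le> 0 \<longrightarrow> T \<le> \<mu> * pi / (2 * sqrt (\<alpha>1 * \<alpha>2))) \<and>
      (0 \<le> \<delta>1 / (2 * sqrt (\<alpha>1 * \<alpha>2)) \<and> \<delta>1 / (2 * sqrt (\<alpha>1 * \<alpha>2)) < 1 \<longrightarrow>
         T \<le> \<mu> / (\<alpha>1 * sqrt ((4 * \<alpha>1 * \<alpha>2 - \<delta>1\<^sup>2) / (4 * \<alpha>1\<^sup>2)))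
               * (pi / 2 - arctan (- \<delta>1 / sqrt (4 * \<alpha>1 * \<alpha>2 - \<delta>1\<^sup>2)))) \<and>
      (1 \<le> \<delta>1 / (2 * sqrt (\<alpha>1 * \<alpha>2)) \<longrightarrow> T \<le> \<mu> * k / ((1 - k) * sqrt (\<alpha>1 * \<alpha>2))))"
proof -
  interpret fixed_time_lyapunov f V DV \<alpha>1 \<alpha>2 \<delta>1 \<mu>
    using V_deriv V_posdef \<alpha>_pos \<mu>_gt V_dot by unfold_locales auto
  define s where "s = sqrt (\<alpha>1 * \<alpha>2)"
  have "0 < s"
    using \<alpha>_pos by (simp add: s_def)
  then have r: "\<delta>1 / (2 * s) \<le> 0 \<longleftrightarrow> \<delta>1 \<le> 0" "0 \<le> \<delta>1 / (2 * s) \<longleftrightarrow> 0 \<le> \<delta>1"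
      "\<delta>1 / (2 * s) < 1 \<longleftrightarrow> \<delta>1 < 2 * s"
    by (simp_all add: divide_le_0_iff zero_le_divide_iff divide_less_eq)
  show ?thesis
  proof (cases "\<delta>1 < 2 * s")
    case True
    then have "D = UNIV"
      using D_def r by (simp add: s_def)
    have "D = UNIV"
      using D_def True r by (simp add: s_def)
    with subcritical_settling[OF True[unfolded s_def]] r True show ?thesis
      unfolding s_def[symmetric] by (elim exE conjE) (intro conjI exI, auto)
  next
    case False
    then have d: "2 * sqrt (\<alpha>1 * \<alpha>2) \<le> \<delta>1"
      by (simp add: s_def)
    define c where "c = (k * lower_root \<alpha>1 \<alpha>2 \<delta>1) powr \<mu>"
    have "0 < lower_root \<alpha>1 \<alpha>2 \<delta>1"
      by (rule lower_root_pos[OF \<alpha>_pos d])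
    then have "c = k powr \<mu> * lower_root \<alpha>1 \<alpha>2 \<delta>1 powr \<mu>" and "0 < c"
      using k_bounds by (simp_all add: c_def powr_mult)
    moreover have "D = {x. V x \<le> k powr \<mu> * lower_root \<alpha>1 \<alpha>2 \<delta>1 powr \<mu>}"
      using D_def False r by (simp add: lower_root_def s_def)
    ultimately show ?thesis
      using False r zero_in_interior_sublevel[OF \<open>0 < c\<close>]
        supercritical_invariant[OF d k_bounds] supercritical_settling[OF d k_bounds]
      unfolding s_def[symmetric] c_def by (intro conjI exI[of _ "\<mu> * k / ((1 - k) * s)"]) auto
  qed
qed

end
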